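(* Let $P\subseteq\mathbb{R}^2$ be a nonempty closed convex set such that $\tau P=P^{\circ}$. If $\gamma$ is a real $2\times 2$ matrix with $\det\gamma=\pm1$, then $\tau(\gamma P)=(\gamma P)^{\circ}$.
   Context: $\tau:\mathbb{R}^2\to\mathbb{R}^2$ denotes the $90^\circ$ counterclockwise rotation. The polar of a set $S\subseteq\mathbb{R}^2$ is $S^{\circ}=\{x\in\mathbb{R}^2: y^\top x\le 1\text{ for all }y\in S\}$. *)

theory Defs
  imports "HOL-Analysis.Analysis"
begin

definition rot90 :: "real^2 \<Rightarrow> real^2" where
  "rot90 x = vector [- (x $ 2), x $ 1]"

definition polar :: "(real^2) set \<Rightarrow> (real^2) set" where
  "polar S = {x. \<forall>y\<in>S. y \<bullet> x \<le> 1}"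

end

theory Submission
  imports Defs
begin

text \<open>
  Writing J for rot90, every real 2x2 matrix satisfies g^T J g = (det g) J, and polarity
  transforms as polar (g S) = (g^T)^-1 (polar S). Moreover J P = polar P forces P = -P,
  because P is contained in polar (polar P) = J (J P) = -P. Hence
  J (g P) = (g^T)^-1 J ((det g) P) = (g^T)^-1 J P = (g^T)^-1 (polar P) = polar (g P).
  Only the inclusion of P in its bipolar is used.
\<close>

lemma rot90_nth [simp]: "rot90 x $ 1 = - x $ 2" "rot90 x $ 2 = x $ 1"
  by (simp_all add: rot90_def)

lemma inner_vec2: "(x::real^2) \<bullet> y = x $ 1 * y $ 1 + x $ 2 * y $ 2"
  by (simp add: inner_vec_def sum_2)

lemma rot90_rot90: "rot90 (rot90 x) = - x"
  by (simp add: vec_eq_iff forall_2)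

lemma rot90_scaleR: "rot90 (c *\<^sub>R x) = c *\<^sub>R rot90 x"
  by (simp add: vec_eq_iff forall_2)

lemma inner_rot90_rot90: "rot90 x \<bullet> rot90 y = x \<bullet> y"
  by (simp add: inner_vec2)

lemma inner_rot90_left: "rot90 x \<bullet> y = x \<bullet> - rot90 y"
  by (simp add: inner_vec2)

lemma transpose_rot90_matrix_vector_mult:
  "transpose g *v rot90 (g *v x) = det (g::real^2^2) *\<^sub>R rot90 x"
  by (simp add: vec_eq_iff forall_2 matrix_vector_mult_def sum_2 transpose_def det_2
      algebra_simps)

lemma inner_matrix_vector_mult_left:
  "(g *v x) \<bullet> y = x \<bullet> (transpose (g::real^2^2) *v y)"
  by (simp add: inner_vec2 matrix_vector_mult_def sum_2 transpose_def algebra_simps)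

lemma polar_polar_superset: "S \<subseteq> polar (polar S)"
  by (auto simp: polar_def inner_commute)

lemma polar_matrix_image:
  "polar ((\<lambda>x. g *v x) ` S) = (\<lambda>x. transpose g *v x) -` polar S"
  by (auto simp: polar_def inner_matrix_vector_mult_left)

lemma polar_rot90_image: "polar (rot90 ` S) = rot90 ` polar S"
proof
  show "polar (rot90 ` S) \<subseteq> rot90 ` polar S"
  proof
    fix x assume "x \<in> polar (rot90 ` S)"
    then have "- rot90 x \<in> polar S"
      by (auto simp: polar_def inner_rot90_left)
    moreover have "x = rot90 (- rot90 x)"
      by (simp add: vec_eq_iff forall_2)
    ultimately show "x \<in> rot90 ` polar S" by blast
  qed
  show "rot90 ` polar S \<subseteq> polar (rot90 ` S)"
    by (auto simp: polar_def inner_rot90_rot90)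
qed

lemma rot90_self_polar_symmetric:
  assumes "rot90 ` P = polar P" and "y \<in> P"
  shows "- y \<in> P"
proof -
  have "polar (polar P) = rot90 ` rot90 ` P"
    using assms(1) polar_rot90_image by metis
  then show ?thesis
    using polar_polar_superset assms(2) by (force simp: rot90_rot90)
qed

lemma rot90_matrix_image_symmetric:
  fixes g :: "real^2^2"
  assumes symmetric: "\<And>y. y \<in> P \<Longrightarrow> - y \<in> P"
    and unimodular: "det g = 1 \<or> det g = -1"
  shows "rot90 ` (\<lambda>x. g *v x) ` P = (\<lambda>x. transpose g *v x) -` rot90 ` P"
proof -
  have scale_P: "det g *\<^sub>R y \<in> P" if "y \<in> P" for y
    using unimodular symmetric that by auto
  have "invertible (transpose g)"
    using unimodular by (auto simp: invertible_det_nz det_transpose)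
  then have inj: "inj (\<lambda>x. transpose g *v x)"
    by (rule inj_matrix_vector_mult)
  show ?thesis
  proof (intro set_eqI iffI)
    fix x
    assume "x \<in> rot90 ` (\<lambda>x. g *v x) ` P"
    then obtain y where "y \<in> P" and x: "x = rot90 (g *v y)" by auto
    have "transpose g *v x = rot90 (det g *\<^sub>R y)"
      unfolding x transpose_rot90_matrix_vector_mult rot90_scaleR ..
    with scale_P[OF \<open>y \<in> P\<close>] show "x \<in> (\<lambda>x. transpose g *v x) -` rot90 ` P" by auto
  next
    fix x
    assume "x \<in> (\<lambda>x. transpose g *v x) -` rot90 ` P"
    then obtain z where "z \<in> P" and z: "transpose g *v x = rot90 z" by auto
    have "det g * det g = 1"
      using unimodular by auto
    then have "transpose g *v rot90 (g *v (det g *\<^sub>R z)) = transpose g *v x"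
      unfolding transpose_rot90_matrix_vector_mult rot90_scaleR z by simp
    then have "x = rot90 (g *v (det g *\<^sub>R z))"
      using inj by (auto dest: injD)
    with scale_P[OF \<open>z \<in> P\<close>] show "x \<in> rot90 ` (\<lambda>x. g *v x) ` P" by blast
  qed
qed

theorem proposition3:
  fixes P :: "(real^2) set" and g :: "real^2^2"
  assumes "P \<noteq> {}" and "closed P" and "convex P"
    and "rot90 ` P = polar P"
    and "det g = 1 \<or> det g = -1"
  shows "rot90 ` ((\<lambda>x. g *v x) ` P) = polar ((\<lambda>x. g *v x) ` P)"
proof -
  have "\<And>y. y \<in> P \<Longrightarrow> - y \<in> P"
    using assms(4) by (rule rot90_self_polar_symmetric)
  then have "rot90 ` (\<lambda>x. g *v x) ` P = (\<lambda>x. transpose g *v x) -` rot90 ` P"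
    using assms(5) by (rule rot90_matrix_image_symmetric)
  also have "\<dots> = polar ((\<lambda>x. g *v x) ` P)"
    by (simp add: assms(4) polar_matrix_image)
  finally show ?thesis .
qed

end
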